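(* Let $\mathcal{K}$ be a Fraïssé class in a relational language $L$ with Fraïssé limit $\mathbf{K}$, exhaustion $\mathbf{K}=\bigcup_n\mathbf{A}_n$, $G=\mathrm{Aut}(\mathbf{K})$ and $H_m=\mathrm{Emb}(\mathbf{A}_m,\mathbf{K})$. Let $\mathcal{K}^*$ be an expansion of $\mathcal{K}$ such that the pair $(\mathcal{K}^*,\mathcal{K})$ is excellent. Then a set $S\subseteq H_m$ is minimal if and only if there are $\mathbf{K}'\in X_{\mathcal{K}^*}$ and $E\subseteq\mathcal{K}^*(\mathbf{A}_m)$ such that $S=H_m(E,\mathbf{K}')$.
   Context: $L^*=L\cup\{S_i\}$ adds new relation symbols; a class $\mathcal{K}^*$ of finite $L^*$-structures closed under isomorphism is an expansion of $\mathcal{K}$ if $\{\mathbf{A}^*|_L:\mathbf{A}^*\in\mathcal{K}^*\}=\mathcal{K}$; $\mathcal{K}^*(\mathbf{A})$ is the set of expansions of $\mathbf{A}$ lying in $\mathcal{K}^*$. The pair is excellent if: $\mathcal{K}^*$ is a Fraïssé class; it is precompact ($\mathcal{K}^*(\mathbf{A})$ finite for each $\mathbf{A}\in\mathcal{K}$); reasonable (for $\mathbf{A},\mathbf{B}\in\mathcal{K}$, an embedding $f:\mathbf{A}\to\mathbf{B}$ and $\mathbf{A}^*\in\mathcal{K}^*(\mathbf{A})$ there is $\mathbf{B}^*\in\mathcal{K}^*(\mathbf{B})$ with $f:\mathbf{A}^*\to\mathbf{B}^*$ an embedding); has the expansion property (for each $\mathbf{A}^*\in\mathcal{K}^*$ there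 is $\mathbf{B}\in\mathcal{K}$ such that every $\mathbf{B}^*\in\mathcal{K}^*(\mathbf{B})$ embeds $\mathbf{A}^*$); and $\mathcal{K}^*$ has the Ramsey property (for $\mathbf{A}\leq\mathbf{B}$ in $\mathcal{K}^*$ and $r\geq2$ there is $\mathbf{C}\in\mathcal{K}^*$ with $\mathbf{B}\leq\mathbf{C}$ such that every $c:\mathrm{Emb}(\mathbf{A},\mathbf{C})\to r$ is constant on $h\circ\mathrm{Emb}(\mathbf{A},\mathbf{B})$ for some $h\in\mathrm{Emb}(\mathbf{B},\mathbf{C})$). $X_{\mathcal{K}^*}$ is the set of $L^*$-expansions $\mathbf{K}'=\langle\mathbf{K},\vec S\rangle$ of $\mathbf{K}$ all of whose finite substructures lie in $\mathcal{K}^*$, topologized by basic open sets $\{\mathbf{K}':\mathbf{A}^*\subseteq\mathbf{K}'\}$, with the right $G$-action $S^{\mathbf{K}'g}(x_1,\dots,x_k)\iff S^{\mathbf{K}'}(g(x_1),\dots,g(x_k))$. For $f\in H_m$, $\mathbf{K}'\cdot f$ is the unique expansion of $\mathbf{A}_m$ with $f\in\mathrm{Emb}(\mathbf{K}'\cdot f,\mathbf{K}')$, and $H_m(E,\mathbf{K}')=\{f\in H_m:\mathbf{K}'\cdot f\in E\}$. Identify subsets of $H_m$ with $2^{H_m}$, on which $G$ acts on the right by $(\chi\cdot g)(f)=\chi(g\circ f)$. $S\subseteq H_m$ is minimal if the orbit closure $\overline{\chi_S\cdot G}\subseteq 2^{H_m}$ is a minimal $G$-flow (every orbit dense). *)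

theory Defs
  imports "HOL-Analysis.Analysis"
begin

text \<open>A structure in a relational language with symbol type 'r: a universe (a subset
  of nat; finite structures and the countable Fraisse limit all live on subsets of nat)
  together with an interpretation of each relation symbol as a predicate on tuples (lists).\<close>

type_synonym 'r struc = "nat set \<times> ('r \<Rightarrow> nat list \<Rightarrow> bool)"

definition carr :: "'r struc \<Rightarrow> nat set" where "carr A = fst A"
definition rel :: "'r struc \<Rightarrow> 'r \<Rightarrow> nat list \<Rightarrow> bool" where "rel A = snd A"

definition wf_struc :: "('r \<Rightarrow> nat) \<Rightarrow> 'r struc \<Rightarrow> bool" where
  "wf_struc ar A \<longleftrightarrow> (\<forall>R xs. rel A R xs \<longrightarrow> length xs = ar R \<and> set xs \<subseteq> carr A)"

definition fin_struc :: "('r \<Rightarrow> nat) \<Rightarrow> 'r struc \<Rightarrow> bool" where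
  "fin_struc ar A \<longleftrightarrow> wf_struc ar A \<and> finite (carr A)"

definition Emb :: "'r struc \<Rightarrow> 'r struc \<Rightarrow> (nat \<Rightarrow> nat) set" where
  "Emb A B = {f. f \<in> extensional (carr A) \<and> inj_on f (carr A) \<and> f ` carr A \<subseteq> carr B \<and>
      (\<forall>R xs. set xs \<subseteq> carr A \<longrightarrow> (rel A R xs \<longleftrightarrow> rel B R (map f xs)))}"

definition isomorphic :: "'r struc \<Rightarrow> 'r struc \<Rightarrow> bool" where
  "isomorphic A B \<longleftrightarrow> (\<exists>f\<in>Emb A B. f ` carr A = carr B)"

definition embeds :: "'r struc \<Rightarrow> 'r struc \<Rightarrow> bool" where
  "embeds A B \<longleftrightarrow> Emb A B \<noteq> {}"

definition substr :: "'r struc \<Rightarrow> nat set \<Rightarrow> 'r struc" where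
  "substr A D = (D, \<lambda>R xs. set xs \<subseteq> D \<and> rel A R xs)"

definition Aut :: "'r struc \<Rightarrow> (nat \<Rightarrow> nat) set" where
  "Aut K = {g \<in> Emb K K. g ` carr K = carr K}"

definition class_of_fin :: "('r \<Rightarrow> nat) \<Rightarrow> 'r struc set \<Rightarrow> bool" where
  "class_of_fin ar C \<longleftrightarrow> (\<forall>A\<in>C. fin_struc ar A)"

definition closed_iso :: "('r \<Rightarrow> nat) \<Rightarrow> 'r struc set \<Rightarrow> bool" where
  "closed_iso ar C \<longleftrightarrow> (\<forall>A B. A \<in> C \<longrightarrow> fin_struc ar B \<longrightarrow> isomorphic A B \<longrightarrow> B \<in> C)"

definition fraisse_class :: "('r \<Rightarrow> nat) \<Rightarrow> 'r struc set \<Rightarrow> bool" where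
  "fraisse_class ar C \<longleftrightarrow> class_of_fin ar C \<and> closed_iso ar C \<and> C \<noteq> {} \<and>
     (\<exists>C0. countable C0 \<and> C0 \<subseteq> C \<and> (\<forall>A\<in>C. \<exists>B\<in>C0. isomorphic B A)) \<and>
     (\<forall>A\<in>C. \<forall>D \<subseteq> carr A. substr A D \<in> C) \<and>
     (\<forall>A\<in>C. \<forall>B\<in>C. \<exists>Z\<in>C. embeds A Z \<and> embeds B Z) \<and>
     (\<forall>A\<in>C. \<forall>B\<in>C. \<forall>B'\<in>C. \<forall>f\<in>Emb A B. \<forall>f'\<in>Emb A B'.
        \<exists>Z\<in>C. \<exists>g\<in>Emb B Z. \<exists>g'\<in>Emb B' Z. \<forall>x\<in>carr A. g (f x) = g' (f' x))"

definition age :: "('r \<Rightarrow> nat) \<Rightarrow> 'r struc \<Rightarrow> 'r struc set" where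
  "age ar K = {A. fin_struc ar A \<and> embeds A K}"

definition ultrahomogeneous :: "'r struc \<Rightarrow> bool" where
  "ultrahomogeneous K \<longleftrightarrow> (\<forall>D. finite D \<longrightarrow> D \<subseteq> carr K \<longrightarrow>
      (\<forall>f\<in>Emb (substr K D) K. \<exists>g\<in>Aut K. \<forall>x\<in>D. g x = f x))"

text \<open>K is a Fraisse limit of C: a countable (it lives on a subset of nat) ultrahomogeneous
  L-structure whose age is C.\<close>
definition fraisse_limit :: "('r \<Rightarrow> nat) \<Rightarrow> 'r struc set \<Rightarrow> 'r struc \<Rightarrow> bool" where
  "fraisse_limit ar C K \<longleftrightarrow> wf_struc ar K \<and> ultrahomogeneous K \<and> age ar K = C"

definition exhaustion :: "'r struc \<Rightarrow> (nat \<Rightarrow> nat set) \<Rightarrow> bool" where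
  "exhaustion K D \<longleftrightarrow> (\<forall>n. finite (D n) \<and> D n \<subseteq> carr K \<and> D n \<subseteq> D (Suc n)) \<and>
      (\<Union>n. D n) = carr K"

definition A_ex :: "'r struc \<Rightarrow> (nat \<Rightarrow> nat set) \<Rightarrow> nat \<Rightarrow> 'r struc" where
  "A_ex K D n = substr K (D n)"

definition H :: "'r struc \<Rightarrow> (nat \<Rightarrow> nat set) \<Rightarrow> nat \<Rightarrow> (nat \<Rightarrow> nat) set" where
  "H K D m = Emb (A_ex K D m) K"

text \<open>L* = L \<union> {S_i}: symbols of type 'r + 's, the new ones having arities ars.\<close>
definition arx :: "('r \<Rightarrow> nat) \<Rightarrow> ('s \<Rightarrow> nat) \<Rightarrow> ('r + 's) \<Rightarrow> nat" where
  "arx ar ars = case_sum ar ars"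

definition reduct :: "('r + 's) struc \<Rightarrow> 'r struc" where
  "reduct A = (carr A, \<lambda>R xs. rel A (Inl R) xs)"

definition is_expansion :: "('r \<Rightarrow> nat) \<Rightarrow> ('s \<Rightarrow> nat) \<Rightarrow> ('r + 's) struc set \<Rightarrow> 'r struc set \<Rightarrow> bool" where
  "is_expansion ar ars Ks C \<longleftrightarrow> class_of_fin (arx ar ars) Ks \<and> closed_iso (arx ar ars) Ks \<and>
      reduct ` Ks = C"

definition expansions_of :: "('r + 's) struc set \<Rightarrow> 'r struc \<Rightarrow> ('r + 's) struc set" where
  "expansions_of Ks A = {As \<in> Ks. reduct As = A}"

definition ramsey_property :: "('r + 's) struc set \<Rightarrow> bool" where
  "ramsey_property Ks \<longleftrightarrow> (\<forall>A\<in>Ks. \<forall>B\<in>Ks. embeds A B \<longrightarrow> (\<forall>r::nat. r \<ge> 2 \<longrightarrow>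
     (\<exists>C\<in>Ks. embeds B C \<and> (\<forall>c. c ` Emb A C \<subseteq> {..<r} \<longrightarrow>
        (\<exists>h\<in>Emb B C. \<exists>k. \<forall>e\<in>Emb A B. c (compose (carr A) h e) = k)))))"

definition excellent :: "('r \<Rightarrow> nat) \<Rightarrow> ('s \<Rightarrow> nat) \<Rightarrow> ('r + 's) struc set \<Rightarrow> 'r struc set \<Rightarrow> bool" where
  "excellent ar ars Ks C \<longleftrightarrow>
     fraisse_class (arx ar ars) Ks \<and>
     (\<forall>A\<in>C. finite (expansions_of Ks A)) \<and>
     (\<forall>A\<in>C. \<forall>B\<in>C. \<forall>f\<in>Emb A B. \<forall>As\<in>expansions_of Ks A.
        \<exists>Bs\<in>expansions_of Ks B. f \<in> Emb As Bs) \<and>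
     (\<forall>As\<in>Ks. \<exists>B\<in>C. \<forall>Bs\<in>expansions_of Ks B. embeds As Bs) \<and>
     ramsey_property Ks"

definition X_space :: "('r \<Rightarrow> nat) \<Rightarrow> ('s \<Rightarrow> nat) \<Rightarrow> ('r + 's) struc set \<Rightarrow> 'r struc \<Rightarrow> ('r + 's) struc set" where
  "X_space ar ars Ks K = {Kp. wf_struc (arx ar ars) Kp \<and> reduct Kp = K \<and>
      (\<forall>D. finite D \<longrightarrow> D \<subseteq> carr Kp \<longrightarrow> substr Kp D \<in> Ks)}"

definition pullback :: "('r + 's) struc \<Rightarrow> nat set \<Rightarrow> (nat \<Rightarrow> nat) \<Rightarrow> ('r + 's) struc" where
  "pullback Kp Dm f = (Dm, \<lambda>R xs. set xs \<subseteq> Dm \<and> rel Kp R (map f xs))"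

definition H_E :: "'r struc \<Rightarrow> (nat \<Rightarrow> nat set) \<Rightarrow> nat \<Rightarrow> ('r + 's) struc set \<Rightarrow> ('r + 's) struc
     \<Rightarrow> (nat \<Rightarrow> nat) set" where
  "H_E K D m E Kp = {f \<in> H K D m. pullback Kp (D m) f \<in> E}"

text \<open>Points of 2^{H_m} are characteristic functions vanishing outside H_m; the topology is
  the product topology on functions (nat \<Rightarrow> nat) \<Rightarrow> bool (the subspace 2^{H_m} is closed).\<close>
definition act :: "'r struc \<Rightarrow> (nat \<Rightarrow> nat set) \<Rightarrow> nat \<Rightarrow> ((nat \<Rightarrow> nat) \<Rightarrow> bool) \<Rightarrow> (nat \<Rightarrow> nat)
     \<Rightarrow> ((nat \<Rightarrow> nat) \<Rightarrow> bool)" where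
  "act K D m c g = (\<lambda>f. f \<in> H K D m \<and> c (compose (D m) g f))"

definition orbit :: "'r struc \<Rightarrow> (nat \<Rightarrow> nat set) \<Rightarrow> nat \<Rightarrow> ((nat \<Rightarrow> nat) \<Rightarrow> bool)
     \<Rightarrow> ((nat \<Rightarrow> nat) \<Rightarrow> bool) set" where
  "orbit K D m c = (\<lambda>g. act K D m c g) ` Aut K"

definition minimal_set :: "'r struc \<Rightarrow> (nat \<Rightarrow> nat set) \<Rightarrow> nat \<Rightarrow> (nat \<Rightarrow> nat) set \<Rightarrow> bool" where
  "minimal_set K D m S \<longleftrightarrow>
     (\<forall>y \<in> closure (orbit K D m (\<lambda>f. f \<in> S)). closure (orbit K D m y) = closure (orbit K D m (\<lambda>f. f \<in> S)))"

end

theory Submission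
  imports Defs
begin

text \<open>
  View a subset of H_m as a predicate on copies of A_m in K and call it type-determined if for
  every n some expansion P of A_n makes its value on embeddings into A_n depend only on the
  P-type of the embedding. Precompactness and Koenig's lemma glue these level-wise expansions
  into one K' in X_{K*}, so the type-determined sets are exactly the sets H_m(E,K'). They form
  a closed invariant set, and every orbit closure meets it: at each level the Ramsey property
  yields an automorphism translating the set into one determined at that level, and
  compactness of 2^{H_m} gives a limit determined at all levels. A minimal set lies in the
  orbit closure of such a limit, hence is type-determined. Conversely, by the expansion
  property every point of the orbit closure of H_m(E,K') can be moved back onto H_m(E,K') on
  any finite set of embeddings, which is minimality.
\<close>

lemma carr_substr [simp]: "carr (substr A Y) = Y"
  by (simp add: carr_def substr_def)

lemma rel_substr [simp]: "rel (substr A Y) R xs \<longleftrightarrow> set xs \<subseteq> Y \<and> rel A R xs"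
  by (simp add: rel_def substr_def)

lemma carr_pullback [simp]: "carr (pullback P X f) = X"
  by (simp add: carr_def pullback_def)

lemma rel_pullback [simp]: "rel (pullback P X f) R xs \<longleftrightarrow> set xs \<subseteq> X \<and> rel P R (map f xs)"
  by (simp add: rel_def pullback_def)

lemma carr_reduct [simp]: "carr (reduct P) = carr P"
  by (simp add: carr_def reduct_def)

lemma rel_reduct [simp]: "rel (reduct P) R xs = rel P (Inl R) xs"
  by (simp add: rel_def reduct_def)

lemma carr_A_ex [simp]: "carr (A_ex K D n) = D n"
  by (simp add: A_ex_def)

lemma struc_eqI: "carr A = carr B \<Longrightarrow> (\<And>R xs. rel A R xs = rel B R xs) \<Longrightarrow> A = B"
  by (simp add: carr_def rel_def prod_eq_iff fun_eq_iff)

lemma EmbD: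
  assumes "f \<in> Emb A B"
  shows "f \<in> extensional (carr A)" "inj_on f (carr A)" "f ` carr A \<subseteq> carr B"
    "\<And>R xs. set xs \<subseteq> carr A \<Longrightarrow> rel A R xs \<longleftrightarrow> rel B R (map f xs)"
  using assms by (auto simp: Emb_def)

lemma EmbI:
  "f \<in> extensional (carr A) \<Longrightarrow> inj_on f (carr A) \<Longrightarrow> f ` carr A \<subseteq> carr B \<Longrightarrow>
   (\<And>R xs. set xs \<subseteq> carr A \<Longrightarrow> rel A R xs \<longleftrightarrow> rel B R (map f xs)) \<Longrightarrow> f \<in> Emb A B"
  by (auto simp: Emb_def)

lemma Emb_compose:
  assumes f: "f \<in> Emb A B" and g: "g \<in> Emb B C"
  shows "compose (carr A) g f \<in> Emb A C"
proof (rule EmbI)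
  have "inj_on (g \<circ> f) (carr A)"
    using EmbD(2,3)[OF f] EmbD(2)[OF g] by (meson comp_inj_on inj_on_subset)
  then show "inj_on (compose (carr A) g f) (carr A)"
    by (rule inj_on_cong[THEN iffD1, rotated]) (simp add: compose_eq)
  show "compose (carr A) g f ` carr A \<subseteq> carr C"
    using EmbD(3)[OF f] EmbD(3)[OF g] by (auto simp: compose_def)
  fix R xs
  assume xs: "set xs \<subseteq> carr A"
  have "map (compose (carr A) g f) xs = map g (map f xs)"
    using xs by (auto simp: compose_def)
  moreover have "set (map f xs) \<subseteq> carr B"
    using xs EmbD(3)[OF f] by auto
  ultimately show "rel A R xs \<longleftrightarrow> rel C R (map (compose (carr A) g f) xs)"
    using EmbD(4)[OF f xs] by (metis EmbD(4)[OF g])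
qed (simp add: compose_extensional)

lemma Emb_restrict:
  assumes f: "f \<in> Emb A B" and Y: "Y \<subseteq> carr A"
  shows "restrict f Y \<in> Emb (substr A Y) B"
proof (rule EmbI)
  fix R xs
  assume xs: "set xs \<subseteq> carr (substr A Y)"
  then have "map (restrict f Y) xs = map f xs"
    by auto
  then show "rel (substr A Y) R xs \<longleftrightarrow> rel B R (map (restrict f Y) xs)"
    using EmbD(4)[OF f, of xs R] xs Y by (simp only:) auto
qed (use EmbD(2,3)[OF f] Y in \<open>auto simp: inj_on_def subset_iff\<close>)

lemma restrict_id_Emb_substr: "Y \<subseteq> carr A \<Longrightarrow> restrict id Y \<in> Emb (substr A Y) A"
proof (rule EmbI)
  fix R xs
  assume xs: "set xs \<subseteq> carr (substr A Y)"
  then have "map (restrict id Y) xs = xs"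
    by (auto intro!: map_idI)
  then show "rel (substr A Y) R xs \<longleftrightarrow> rel A R (map (restrict id Y) xs)"
    using xs by simp
qed auto

lemma Emb_substr_target: "f \<in> Emb A B \<Longrightarrow> f ` carr A \<subseteq> Y \<Longrightarrow> f \<in> Emb A (substr B Y)"
  unfolding Emb_def by (auto 4 4)

lemma Emb_reduct: "e \<in> Emb A B \<Longrightarrow> e \<in> Emb (reduct A) (reduct B)"
  by (auto simp: Emb_def)

lemma embeds_trans: "embeds A B \<Longrightarrow> embeds B C \<Longrightarrow> embeds A C"
  unfolding embeds_def using Emb_compose by blast

lemma substr_carr: "wf_struc ar P \<Longrightarrow> substr P (carr P) = P"
  by (rule struc_eqI) (auto simp: wf_struc_def)

lemma embeds_refl: "wf_struc ar P \<Longrightarrow> embeds P P"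
  using restrict_id_Emb_substr[of "carr P" P] substr_carr[of ar P] by (auto simp: embeds_def)

lemma substr_substr: "Y \<subseteq> Y' \<Longrightarrow> substr (substr P Y') Y = substr P Y"
  by (rule struc_eqI) auto

lemma reduct_substr: "reduct (substr P Y) = substr (reduct P) Y"
  by (rule struc_eqI) auto


lemma pullback_cong: "(\<And>x. x \<in> X \<Longrightarrow> f x = g x) \<Longrightarrow> pullback P X f = pullback P X g"
proof (rule struc_eqI)
  fix R xs
  assume "\<And>x. x \<in> X \<Longrightarrow> f x = g x"
  then show "rel (pullback P X f) R xs = rel (pullback P X g) R xs"
    by (cases "set xs \<subseteq> X") (auto intro!: arg_cong[where f="rel P R"] map_cong)
qed simp

lemma pullback_substr: "f ` X \<subseteq> Y \<Longrightarrow> pullback (substr P Y) X f = pullback P X f"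
  by (rule struc_eqI) auto

lemma pullback_pullback:
  assumes "f ` X \<subseteq> Y"
  shows "pullback (pullback P Y \<phi>) X f = pullback P X (compose X \<phi> f)"
proof (rule struc_eqI)
  fix R xs
  show "rel (pullback (pullback P Y \<phi>) X f) R xs = rel (pullback P X (compose X \<phi> f)) R xs"
  proof (cases "set xs \<subseteq> X")
    case True
    then have eq: "map (compose X \<phi> f) xs = map (\<phi> \<circ> f) xs"
      by (auto simp: compose_def)
    show ?thesis
      using True assms by (auto simp: eq)
  qed auto
qed simp

lemma pullback_compose_stable:
  assumes stable: "pullback P Y (compose Y g h) = substr P Y" and f: "f ` X \<subseteq> Y"
  shows "pullback P X (compose X g (compose X h f)) = pullback P X f"
proof -
  have "f \<in> X \<rightarrow> Y"
    using f by (simp add: image_subset_iff_funcset)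
  then have "pullback P X (compose X g (compose X h f)) = pullback (pullback P Y (compose Y g h)) X f"
    by (simp add: compose_assoc pullback_pullback[OF f])
  also have "\<dots> = pullback P X f"
    by (simp add: stable pullback_substr[OF f])
  finally show ?thesis .
qed

lemma pullback_Emb_eq:
  assumes e: "e \<in> Emb A B" and wf: "wf_struc ar A"
  shows "pullback B (carr A) e = A"
proof (rule struc_eqI)
  fix R xs
  have "rel A R xs \<Longrightarrow> set xs \<subseteq> carr A"
    using wf by (simp add: wf_struc_def)
  then show "rel (pullback B (carr A) e) R xs = rel A R xs"
    using EmbD(4)[OF e] by auto
qed simp

lemma reduct_pullback:
  assumes f: "f \<in> Emb A (reduct P)" and wf: "wf_struc ar A"
  shows "reduct (pullback P (carr A) f) = A"
proof (rule struc_eqI)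
  fix R xs
  have "rel A R xs \<Longrightarrow> set xs \<subseteq> carr A"
    using wf by (simp add: wf_struc_def)
  then show "rel (reduct (pullback P (carr A) f)) R xs = rel A R xs"
    using EmbD(4)[OF f] by auto
qed simp

lemma Emb_pullback:
  "f \<in> extensional X \<Longrightarrow> inj_on f X \<Longrightarrow> f ` X \<subseteq> carr P \<Longrightarrow> f \<in> Emb (pullback P X f) P"
  by (rule EmbI) auto

lemma inv_into_Emb_pullback:
  assumes inj: "inj_on f X"
  shows "restrict (inv_into X f) (f ` X) \<in> Emb (substr P (f ` X)) (pullback P X f)"
proof (rule EmbI)
  fix R xs
  assume xs: "set xs \<subseteq> carr (substr P (f ` X))"
  then have "map f (map (restrict (inv_into X f) (f ` X)) xs) = xs"
    by (auto intro!: map_idI simp: f_inv_into_f)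
  moreover have "set (map (restrict (inv_into X f) (f ` X)) xs) \<subseteq> X"
    using xs by (auto simp: inv_into_into)
  ultimately show "rel (substr P (f ` X)) R xs \<longleftrightarrow>
      rel (pullback P X f) R (map (restrict (inv_into X f) (f ` X)) xs)"
    using xs by simp
qed (use inj in \<open>auto simp: inj_on_def inv_into_into\<close>)

lemma isomorphic_substr_pullback:
  "inj_on f X \<Longrightarrow> isomorphic (substr P (f ` X)) (pullback P X f)"
  unfolding isomorphic_def by (rule bexI[OF _ inv_into_Emb_pullback]) (auto simp: image_image)

lemma wf_pullback: "wf_struc ar P \<Longrightarrow> wf_struc ar (pullback P X f)"
  unfolding wf_struc_def by (metis carr_pullback length_map rel_pullback)

lemma wf_substr: "wf_struc ar A \<Longrightarrow> wf_struc ar (substr A Y)"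
  by (simp add: wf_struc_def)

section \<open>The product topology on predicates\<close>

lemma closure_bool_funD:
  assumes c: "(c :: 'a \<Rightarrow> bool) \<in> closure U" and "finite \<Phi>"
  shows "\<exists>u\<in>U. \<forall>f\<in>\<Phi>. u f = c f"
proof -
  have "open {f. \<forall>i\<in>\<Phi>. f (id i) \<in> {c i}}"
    by (rule product_topology_basis') (auto simp: \<open>finite \<Phi>\<close> intro: open_discrete)
  moreover have "c \<in> {f. \<forall>i\<in>\<Phi>. f (id i) \<in> {c i}}"
    by auto
  ultimately have "U \<inter> {f. \<forall>i\<in>\<Phi>. f (id i) \<in> {c i}} \<noteq> {}"
    using c unfolding closure_iff_nhds_not_empty by blast
  then show ?thesis
    by auto
qed

lemma closure_bool_funI:
  assumes agree: "\<And>\<Phi>. finite \<Phi> \<Longrightarrow> \<exists>u\<in>U. \<forall>f\<in>\<Phi>. u f = c f"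
  shows "(c :: 'a \<Rightarrow> bool) \<in> closure U"
  unfolding closure_iff_nhds_not_empty
proof (intro allI impI)
  fix A S
  assume SA: "S \<subseteq> A" and "open S" and cS: "c \<in> S"
  then have "openin (product_topology (\<lambda>i. euclidean) UNIV) S"
    by (simp add: open_fun_def)
  then obtain V where V: "finite {i \<in> UNIV. V i \<noteq> topspace (euclidean :: bool topology)}"
      "c \<in> Pi\<^sub>E UNIV V" "Pi\<^sub>E UNIV V \<subseteq> S"
    using cS unfolding openin_product_topology_alt by blast
  then obtain u where u: "u \<in> U"
      "\<forall>f\<in>{i \<in> UNIV. V i \<noteq> topspace (euclidean :: bool topology)}. u f = c f"
    using agree by blast
  have "u i \<in> V i" for i
  proof (cases "V i = UNIV")
    case False
    then show ?thesis
      using u(2) V(2) by (auto simp: PiE_iff)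
  qed simp
  then have "u \<in> Pi\<^sub>E UNIV V"
    by (simp add: PiE_iff)
  then show "U \<inter> A \<noteq> {}"
    using u(1) V(3) SA by blast
qed

lemma closure_bool_fun_iff:
  "(c :: 'a \<Rightarrow> bool) \<in> closure U \<longleftrightarrow> (\<forall>\<Phi>. finite \<Phi> \<longrightarrow> (\<exists>u\<in>U. \<forall>f\<in>\<Phi>. u f = c f))"
proof
  assume "c \<in> closure U"
  then show "\<forall>\<Phi>. finite \<Phi> \<longrightarrow> (\<exists>u\<in>U. \<forall>f\<in>\<Phi>. u f = c f)"
    using closure_bool_funD by blast
next
  assume "\<forall>\<Phi>. finite \<Phi> \<longrightarrow> (\<exists>u\<in>U. \<forall>f\<in>\<Phi>. u f = c f)"
  then show "c \<in> closure U"
    by (simp add: closure_bool_funI)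
qed

lemma compact_UNIV_bool_fun: "compact (UNIV :: ('a \<Rightarrow> bool) set)"
proof -
  have "compact_space (euclidean :: bool topology)"
    by (simp add: compact_space_def finite_imp_compact)
  then have "compact_space (product_topology (\<lambda>_::'a. euclidean :: bool topology) UNIV)"
    by (simp add: compact_space_product_topology)
  then show ?thesis
    by (simp add: euclidean_product_topology compact_space_def)
qed

lemma closed_bool_fun_supported: "closed {c :: 'a \<Rightarrow> bool. \<forall>x. c x \<longrightarrow> x \<in> A}"
proof -
  have "x \<in> A" if "c \<in> closure {c. \<forall>x. c x \<longrightarrow> x \<in> A}" "c x" for c x
    using closure_bool_funD[OF that(1), of "{x}"] that(2) by auto
  then show ?thesis
    using closure_subset_eq by blast
qed

section \<open>Koenig's lemma\<close>

context
  fixes Q :: "nat \<Rightarrow> 'a \<Rightarrow> bool" and res :: "nat \<Rightarrow> 'a \<Rightarrow> 'a"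
  assumes res_Q: "\<And>n k x. n \<le> k \<Longrightarrow> Q k x \<Longrightarrow> Q n (res n x)"
    and res_res: "\<And>n k j x. n \<le> k \<Longrightarrow> k \<le> j \<Longrightarrow> Q j x \<Longrightarrow> res n (res k x) = res n x"
begin

lemma inverse_system_pigeonhole:
  assumes C: "finite C" and hit: "\<forall>k\<ge>n. \<exists>z. Q k z \<and> res n z \<in> C"
  shows "\<exists>x\<in>C. \<forall>k\<ge>n. \<exists>z. Q k z \<and> res n z = x"
proof (rule ccontr)
  assume "\<not> ?thesis"
  then obtain miss where miss: "\<And>x. x \<in> C \<Longrightarrow> miss x \<ge> n \<and> \<not> (\<exists>z. Q (miss x) z \<and> res n z = x)"
    by metis
  define k where "k = Max (insert n (miss ` C))"
  have "k \<ge> n" and k: "\<And>x. x \<in> C \<Longrightarrow> miss x \<le> k"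
    using C by (auto simp: k_def)
  then obtain z where z: "Q k z" "res n z \<in> C"
    using hit by blast
  let ?x = "res n z"
  have "Q (miss ?x) (res (miss ?x) z)"
    using res_Q[OF k[OF z(2)] z(1)] .
  moreover have "res n (res (miss ?x) z) = ?x"
    using res_res[of n "miss ?x" k z] miss[OF z(2)] k[OF z(2)] z(1) by simp
  ultimately show False
    using miss[OF z(2)] by blast
qed

lemma inverse_system_extend:
  assumes fin: "finite {x. Q (Suc n) x}" and x: "\<forall>k\<ge>n. \<exists>z. Q k z \<and> res n z = x"
  shows "\<exists>x'. res n x' = x \<and> Q (Suc n) x' \<and> (\<forall>k\<ge>Suc n. \<exists>z. Q k z \<and> res (Suc n) z = x')"
proof -
  let ?C = "{x'. Q (Suc n) x' \<and> res n x' = x}"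
  have "finite ?C"
    by (rule finite_subset[OF _ fin]) auto
  moreover have "\<forall>k\<ge>Suc n. \<exists>z. Q k z \<and> res (Suc n) z \<in> ?C"
  proof (intro allI impI)
    fix k
    assume k: "Suc n \<le> k"
    then obtain z where z: "Q k z" "res n z = x"
      using x by (meson Suc_leD)
    then show "\<exists>z. Q k z \<and> res (Suc n) z \<in> ?C"
      using res_Q[OF k z(1)] res_res[of n "Suc n" k z] k by auto
  qed
  ultimately obtain x' where "x' \<in> ?C" "\<forall>k\<ge>Suc n. \<exists>z. Q k z \<and> res (Suc n) z = x'"
    using inverse_system_pigeonhole by blast
  then show ?thesis
    by blast
qed

lemma inverse_system_coherent_sequence:
  assumes fin: "\<And>n. finite {x. Q n x}" and ne: "\<And>n. \<exists>x. Q n x"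
    and res_id: "\<And>n x. Q n x \<Longrightarrow> res n x = x"
  shows "\<exists>s. \<forall>n. Q n (s n) \<and> (\<forall>k\<ge>n. res n (s k) = s n)"
proof -
  define extendable where "extendable n x \<longleftrightarrow> Q n x \<and> (\<forall>k\<ge>n. \<exists>z. Q k z \<and> res n z = x)" for n x
  have "\<exists>z. Q k z \<and> res 0 z \<in> {x. Q 0 x}" for k
  proof -
    obtain z where "Q k z"
      using ne by blast
    then show ?thesis
      using res_Q[of 0 k z] by auto
  qed
  then have "\<forall>k\<ge>0. \<exists>z. Q k z \<and> res 0 z \<in> {x. Q 0 x}"
    by blast
  from inverse_system_pigeonhole[OF fin this]
  obtain x0 where "x0 \<in> {x. Q 0 x}" "\<forall>k\<ge>0. \<exists>z. Q k z \<and> res 0 z = x0" ..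
  then have x0: "extendable 0 x0"
    unfolding extendable_def by blast
  have "\<exists>x'. extendable (Suc n) x' \<and> res n x' = x" if "extendable n x" for n x
    using inverse_system_extend[OF fin] that unfolding extendable_def by blast
  then obtain succ where succ: "\<And>n x. extendable n x \<Longrightarrow> extendable (Suc n) (succ n x) \<and> res n (succ n x) = x"
    by metis
  define s where "s = rec_nat x0 succ"
  have s: "extendable n (s n)" for n
    by (induction n) (simp_all add: s_def x0 succ)
  have "res n (s k) = s n" if "n \<le> k" for n k
    using that
  proof (induction k rule: dec_induct)
    case base
    show ?case
      using s[of n] res_id unfolding extendable_def by blast
  next
    case (step k)
    have "res n (s (Suc k)) = res n (res k (s (Suc k)))"
      using res_res[of n k "Suc k" "s (Suc k)"] step.hyps s[of "Suc k"] unfolding extendable_def by simp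
    also have "\<dots> = s n"
      using succ[OF s[of k]] step.IH by (simp add: s_def)
    finally show ?case .
  qed
  then show ?thesis
    using s unfolding extendable_def by blast
qed

end

section \<open>Consequences of the Ramsey property\<close>

lemma ramsey_property_two_colours:
  assumes "ramsey_property Ks" and "A \<in> Ks" "B \<in> Ks" "embeds A B"
  shows "\<exists>C\<in>Ks. embeds B C \<and>
    (\<forall>c :: (nat \<Rightarrow> nat) \<Rightarrow> bool. \<exists>h\<in>Emb B C. \<exists>k. \<forall>e\<in>Emb A B. c (compose (carr A) h e) = k)"
proof -
  obtain C where C: "C \<in> Ks" "embeds B C"
    and colour: "\<And>c. c ` Emb A C \<subseteq> {..<2::nat} \<Longrightarrow>
      \<exists>h\<in>Emb B C. \<exists>k. \<forall>e\<in>Emb A B. c (compose (carr A) h e) = k"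
    using assms unfolding ramsey_property_def by (metis le_refl)
  have "\<exists>h\<in>Emb B C. \<exists>k. \<forall>e\<in>Emb A B. c (compose (carr A) h e) = k" for c :: "(nat \<Rightarrow> nat) \<Rightarrow> bool"
  proof -
    obtain h k where "h \<in> Emb B C" "\<forall>e\<in>Emb A B. of_bool (c (compose (carr A) h e)) = (k::nat)"
      using colour[of "\<lambda>e. of_bool (c e)"] by fastforce
    then show ?thesis
      by (metis of_bool_eq_iff)
  qed
  with C show ?thesis
    by blast
qed

lemma homogeneous_compose:
  assumes h1: "\<forall>e\<in>Emb A C'. c A (compose (carr A) h1 e) = k1"
    and h2: "h2 \<in> Emb B C'"
      "\<forall>A'\<in>S. \<exists>k. \<forall>e\<in>Emb A' B. c A' (compose (carr A') h1 (compose (carr A') h2 e)) = k"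
  shows "\<forall>A'\<in>insert A S. \<exists>k. \<forall>e\<in>Emb A' B. c A' (compose (carr A') (compose (carr B) h1 h2) e) = k"
proof -
  have assoc: "compose (carr A') (compose (carr B) h1 h2) e = compose (carr A') h1 (compose (carr A') h2 e)"
    if "e \<in> Emb A' B" for A' e
    using EmbD(3)[OF that] by (simp add: compose_assoc image_subset_iff_funcset)
  have "\<forall>e\<in>Emb A B. c A (compose (carr A) (compose (carr B) h1 h2) e) = k1"
    using h1 assoc Emb_compose[OF _ h2(1)] by simp
  then show ?thesis
    using h2(2) assoc by (metis insert_iff)
qed

lemma ramsey_property_insert:
  assumes ramsey: "ramsey_property Ks" and fin: "class_of_fin ar Ks" and A: "A \<in> Ks" and C': "C' \<in> Ks"
    and IH: "\<And>c :: ('r + 's) struc \<Rightarrow> (nat \<Rightarrow> nat) \<Rightarrow> bool. \<exists>h\<in>Emb B C'.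
      \<forall>A'\<in>S. \<exists>k. \<forall>e\<in>Emb A' B. c A' (compose (carr A') h e) = k"
  shows "\<exists>C\<in>Ks. embeds C' C \<and>
    (\<forall>c :: ('r + 's) struc \<Rightarrow> (nat \<Rightarrow> nat) \<Rightarrow> bool. \<exists>h\<in>Emb B C.
       \<forall>A'\<in>insert A S. \<exists>k. \<forall>e\<in>Emb A' B. c A' (compose (carr A') h e) = k)"
proof (cases "embeds A C'")
  case False
  obtain h0 where "h0 \<in> Emb B C'"
    using IH[of "\<lambda>_ _. True"] by blast
  then have empty: "Emb A B = {}"
    using False Emb_compose unfolding embeds_def by blast
  have "\<exists>h\<in>Emb B C'. \<forall>A'\<in>insert A S. \<exists>k. \<forall>e\<in>Emb A' B. c A' (compose (carr A') h e) = k"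
    for c :: "('r + 's) struc \<Rightarrow> (nat \<Rightarrow> nat) \<Rightarrow> bool"
    using IH[of c] empty by simp
  moreover have "wf_struc ar C'"
    using C' fin by (simp add: class_of_fin_def fin_struc_def)
  then have "embeds C' C'"
    by (rule embeds_refl)
  ultimately show ?thesis
    using C' by blast
next
  case True
  obtain C where C: "C \<in> Ks" "embeds C' C"
    and R: "\<And>c :: (nat \<Rightarrow> nat) \<Rightarrow> bool. \<exists>h\<in>Emb C' C. \<exists>k. \<forall>e\<in>Emb A C'. c (compose (carr A) h e) = k"
    using ramsey_property_two_colours[OF ramsey A C' True] by auto
  have "\<exists>h\<in>Emb B C. \<forall>A'\<in>insert A S. \<exists>k. \<forall>e\<in>Emb A' B. c A' (compose (carr A') h e) = k"
    for c :: "('r + 's) struc \<Rightarrow> (nat \<Rightarrow> nat) \<Rightarrow> bool"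
  proof -
    obtain h1 k1 where h1: "h1 \<in> Emb C' C" "\<forall>e\<in>Emb A C'. c A (compose (carr A) h1 e) = k1"
      using R[of "c A"] by blast
    obtain h2 where h2: "h2 \<in> Emb B C'"
      "\<forall>A'\<in>S. \<exists>k. \<forall>e\<in>Emb A' B. c A' (compose (carr A') h1 (compose (carr A') h2 e)) = k"
      using IH[of "\<lambda>A' e. c A' (compose (carr A') h1 e)"] by blast
    show ?thesis
      using homogeneous_compose[OF h1(2) h2] Emb_compose[OF h2(1) h1(1)] by blast
  qed
  then show ?thesis
    using C by blast
qed

lemma ramsey_property_simultaneous:
  assumes ramsey: "ramsey_property Ks" and fin: "class_of_fin ar Ks" and B: "B \<in> Ks"
  shows "set L \<subseteq> Ks \<Longrightarrow> \<exists>C\<in>Ks. embeds B C \<and>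
    (\<forall>c :: ('r + 's) struc \<Rightarrow> (nat \<Rightarrow> nat) \<Rightarrow> bool. \<exists>h\<in>Emb B C.
       \<forall>A\<in>set L. \<exists>k. \<forall>e\<in>Emb A B. c A (compose (carr A) h e) = k)"
proof (induction L)
  case Nil
  show ?case
    using B embeds_refl fin by (fastforce simp: class_of_fin_def fin_struc_def embeds_def)
next
  case (Cons A L)
  then obtain C' where C': "C' \<in> Ks" "embeds B C'"
    and IH: "\<And>c :: ('r + 's) struc \<Rightarrow> (nat \<Rightarrow> nat) \<Rightarrow> bool. \<exists>h\<in>Emb B C'.
      \<forall>A\<in>set L. \<exists>k. \<forall>e\<in>Emb A B. c A (compose (carr A) h e) = k"
    by auto
  have "A \<in> Ks"
    using Cons.prems by simp
  from ramsey_property_insert[OF ramsey fin this C'(1) IH]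
  obtain C where C: "C \<in> Ks" "embeds C' C" "\<forall>c :: ('r + 's) struc \<Rightarrow> (nat \<Rightarrow> nat) \<Rightarrow> bool.
      \<exists>h\<in>Emb B C. \<forall>A'\<in>insert A (set L). \<exists>k. \<forall>e\<in>Emb A' B. c A' (compose (carr A') h e) = k"
    by blast
  show ?case
    unfolding list.set(2) using C embeds_trans[OF C'(2) C(2)] by blast
qed

locale excellent_expansion =
  fixes ar :: "'r \<Rightarrow> nat" and ars :: "'s \<Rightarrow> nat"
    and KK :: "'r struc set" and K :: "'r struc" and D :: "nat \<Rightarrow> nat set"
    and Ks :: "('r + 's) struc set" and m :: nat
  assumes limit: "fraisse_limit ar KK K" and exhaustion: "exhaustion K D"
    and expansion: "is_expansion ar ars Ks KK" and excellent: "excellent ar ars Ks KK"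
begin

abbreviation "Hm \<equiv> H K D m"
abbreviation "X \<equiv> X_space ar ars Ks K"
abbreviation "act_m \<equiv> act K D m"
abbreviation "orbit_m \<equiv> orbit K D m"

definition H_into :: "nat set \<Rightarrow> (nat \<Rightarrow> nat) set" where
  "H_into V = {f \<in> Hm. f ` D m \<subseteq> V}"

lemma wf_K: "wf_struc ar K"
  using limit by (simp add: fraisse_limit_def)

lemma D_finite: "finite (D n)" and D_subset: "D n \<subseteq> carr K"
  and D_Suc: "D n \<subseteq> D (Suc n)" and Union_D: "(\<Union>n. D n) = carr K"
  using exhaustion by (auto simp: exhaustion_def)

lemma D_mono: "n \<le> k \<Longrightarrow> D n \<subseteq> D k"
  by (induction k rule: dec_induct) (use D_Suc in auto)

lemma finite_subset_D:
  assumes "finite Y" "Y \<subseteq> carr K"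
  shows "\<exists>n. Y \<subseteq> D n"
  using assms
proof (induction Y rule: finite_induct)
  case (insert x Y)
  then obtain n where "Y \<subseteq> D n"
    by auto
  moreover obtain k where "x \<in> D k"
    using insert.prems Union_D by auto
  ultimately have "insert x Y \<subseteq> D (max n k)"
    using D_mono[of n "max n k"] D_mono[of k "max n k"] by auto
  then show ?case ..
qed simp

lemma Ks_fraisse: "fraisse_class (arx ar ars) Ks"
  using excellent by (simp add: excellent_def)

lemma Ks_class_of_fin: "class_of_fin (arx ar ars) Ks"
  using Ks_fraisse by (simp add: fraisse_class_def)

lemma Ks_wf: "P \<in> Ks \<Longrightarrow> wf_struc (arx ar ars) P"
  using Ks_class_of_fin by (simp add: class_of_fin_def fin_struc_def)

lemma Ks_substr: "P \<in> Ks \<Longrightarrow> Y \<subseteq> carr P \<Longrightarrow> substr P Y \<in> Ks"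
  using Ks_fraisse by (simp add: fraisse_class_def)

lemma Ks_isomorphic: "P \<in> Ks \<Longrightarrow> fin_struc (arx ar ars) Q \<Longrightarrow> isomorphic P Q \<Longrightarrow> Q \<in> Ks"
  using Ks_fraisse unfolding fraisse_class_def closed_iso_def by blast

lemma reduct_Ks: "reduct ` Ks = KK"
  using expansion by (simp add: is_expansion_def)

lemma finite_expansions: "A \<in> KK \<Longrightarrow> finite (expansions_of Ks A)"
  using excellent by (simp add: excellent_def)

lemma Ks_expansion_property: "P \<in> Ks \<Longrightarrow> \<exists>B\<in>KK. \<forall>Q\<in>expansions_of Ks B. embeds P Q"
  using excellent by (simp add: excellent_def)

lemma Ks_ramsey: "ramsey_property Ks"
  using excellent by (simp add: excellent_def)

lemma KK_Emb_K: "A \<in> KK \<Longrightarrow> \<exists>\<iota>. \<iota> \<in> Emb A K"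
  using limit by (auto simp: fraisse_limit_def age_def embeds_def)

lemma KK_fin_struc: "A \<in> KK \<Longrightarrow> fin_struc ar A"
  using limit by (auto simp: fraisse_limit_def age_def)

lemma A_ex_in_KK: "A_ex K D n \<in> KK"
proof -
  have "fin_struc ar (A_ex K D n)"
    using wf_substr[OF wf_K] D_finite by (simp add: A_ex_def fin_struc_def)
  moreover have "embeds (A_ex K D n) K"
    using restrict_id_Emb_substr[OF D_subset] by (auto simp: A_ex_def embeds_def)
  ultimately show ?thesis
    using limit by (auto simp: fraisse_limit_def age_def)
qed

lemma Emb_A_ex_extends_to_Aut:
  assumes "e \<in> Emb (A_ex K D n) K"
  shows "\<exists>g\<in>Aut K. \<forall>x\<in>D n. g x = e x"
proof -
  have "ultrahomogeneous K"
    using limit by (simp add: fraisse_limit_def)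
  then show ?thesis
    using D_finite D_subset assms unfolding ultrahomogeneous_def A_ex_def by blast
qed

lemma Aut_Emb: "g \<in> Aut K \<Longrightarrow> g \<in> Emb K K"
  by (simp add: Aut_def)

lemma Aut_compose:
  assumes "g \<in> Aut K" "h \<in> Aut K"
  shows "compose (carr K) g h \<in> Aut K"
proof -
  have "compose (carr K) g h ` carr K = g ` h ` carr K"
    by (auto simp: compose_def)
  then show ?thesis
    using assms Emb_compose[of h K K g K] unfolding Aut_def by auto
qed

lemma restrict_id_Aut: "restrict id (carr K) \<in> Aut K"
  using restrict_id_Emb_substr[of "carr K" K] substr_carr[OF wf_K] unfolding Aut_def by auto

lemma HmD:
  assumes "f \<in> Hm"
  shows "f \<in> extensional (D m)" "inj_on f (D m)" "f ` D m \<subseteq> carr K"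
  using EmbD[OF assms[unfolded H_def]] by auto

lemma compose_Aut_Hm: "f \<in> Hm \<Longrightarrow> g \<in> Aut K \<Longrightarrow> compose (D m) g f \<in> Hm"
  unfolding H_def using Emb_compose[of f "A_ex K D m" K g K] Aut_Emb by auto

lemma compose_compose_Hm:
  assumes "f \<in> Hm"
  shows "compose (D m) (compose (carr K) g h) f = compose (D m) g (compose (D m) h f)"
proof -
  have "f \<in> D m \<rightarrow> carr K"
    using HmD(3)[OF assms] by (simp add: image_subset_iff_funcset)
  then show ?thesis
    by (simp add: compose_assoc)
qed

lemma finite_H_into:
  assumes "finite V"
  shows "finite (H_into V)"
proof (rule finite_subset)
  show "H_into V \<subseteq> D m \<rightarrow>\<^sub>E V"
    using HmD(1) by (auto simp: H_into_def PiE_def)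
  show "finite (D m \<rightarrow>\<^sub>E V)"
    using D_finite assms by (rule finite_PiE)
qed

lemma H_into_mono: "n \<le> k \<Longrightarrow> H_into (D n) \<subseteq> H_into (D k)"
  using D_mono unfolding H_into_def by blast

lemma H_into_cover:
  assumes "finite F" "F \<subseteq> Hm"
  shows "\<exists>n. F \<subseteq> H_into (D n)"
proof -
  have "finite (\<Union>f\<in>F. f ` D m)"
    using assms D_finite by auto
  moreover have "(\<Union>f\<in>F. f ` D m) \<subseteq> carr K"
    using assms HmD(3) by blast
  ultimately obtain n where "(\<Union>f\<in>F. f ` D m) \<subseteq> D n"
    using finite_subset_D by blast
  then have "F \<subseteq> H_into (D n)"
    using assms by (auto simp: H_into_def)
  then show ?thesis ..
qed

lemma H_into_Emb:
  assumes "f \<in> H_into (D n)"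
  shows "f \<in> Emb (A_ex K D m) (A_ex K D n)"
proof -
  have "f \<in> Emb (A_ex K D m) K" "f ` carr (A_ex K D m) \<subseteq> D n"
    using assms by (simp_all add: H_into_def H_def)
  then show ?thesis
    unfolding A_ex_def[of K D n] by (rule Emb_substr_target)
qed

lemma X_space_reduct: "Kp \<in> X \<Longrightarrow> reduct Kp = K"
  by (simp add: X_space_def)

lemma X_space_carr: "Kp \<in> X \<Longrightarrow> carr Kp = carr K"
  using carr_reduct[of Kp] X_space_reduct by simp

lemma X_space_substr:
  assumes "Kp \<in> X" "finite Y" "Y \<subseteq> carr K"
  shows "substr Kp Y \<in> Ks"
  using assms X_space_carr[OF assms(1)] unfolding X_space_def by blast

lemma X_space_wf: "Kp \<in> X \<Longrightarrow> wf_struc (arx ar ars) Kp"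
  by (simp add: X_space_def)

lemma pullback_in_expansions:
  assumes A: "A \<in> KK" and wf: "wf_struc (arx ar ars) P" and f: "f \<in> Emb A (reduct P)"
    and image: "substr P (f ` carr A) \<in> Ks"
  shows "pullback P (carr A) f \<in> expansions_of Ks A"
proof -
  have fin: "fin_struc (arx ar ars) (pullback P (carr A) f)"
    using wf_pullback[OF wf] KK_fin_struc[OF A] by (simp add: fin_struc_def)
  have "pullback P (carr A) f \<in> Ks"
    by (rule Ks_isomorphic[OF image fin isomorphic_substr_pullback[OF EmbD(2)[OF f]]])
  moreover have "reduct (pullback P (carr A) f) = A"
    using reduct_pullback[OF f, of ar] KK_fin_struc[OF A] by (simp add: fin_struc_def)
  ultimately show ?thesis
    by (simp add: expansions_of_def)
qed

lemma expansion_in_Ks: "P \<in> expansions_of Ks A \<Longrightarrow> P \<in> Ks"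
  by (simp add: expansions_of_def)

lemma reduct_expansion: "P \<in> expansions_of Ks A \<Longrightarrow> reduct P = A"
  by (simp add: expansions_of_def)

lemma carr_expansion: "P \<in> expansions_of Ks (A_ex K D n) \<Longrightarrow> carr P = D n"
  using carr_reduct[of P] reduct_expansion[of P] by simp

lemma expansion_substr:
  assumes P: "P \<in> expansions_of Ks (A_ex K D k)" and "n \<le> k"
  shows "substr P (D n) \<in> expansions_of Ks (A_ex K D n)"
proof -
  have "substr P (D n) \<in> Ks"
    using Ks_substr[OF expansion_in_Ks[OF P]] carr_expansion[OF P] D_mono[OF \<open>n \<le> k\<close>] by simp
  moreover have "reduct (substr P (D n)) = substr (substr K (D k)) (D n)"
    using reduct_expansion[OF P] by (simp add: reduct_substr A_ex_def)
  with substr_substr[OF D_mono[OF \<open>n \<le> k\<close>]]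
  have "reduct (substr P (D n)) = A_ex K D n"
    by (simp add: A_ex_def)
  ultimately show ?thesis
    by (simp add: expansions_of_def)
qed

lemma expansion_substr_self:
  assumes "P \<in> expansions_of Ks (A_ex K D n)"
  shows "substr P (D n) = P"
  using substr_carr[OF Ks_wf[OF expansion_in_Ks[OF assms]]] carr_expansion[OF assms] by simp

lemma closure_orbit_iff:
  "y \<in> closure (orbit_m c) \<longleftrightarrow> (\<forall>\<Phi>. finite \<Phi> \<longrightarrow> (\<exists>g\<in>Aut K. \<forall>f\<in>\<Phi>. act_m c g f = y f))"
  unfolding closure_bool_fun_iff orbit_def by blast

lemma act_in_closure_orbit:
  assumes y: "y \<in> closure (orbit_m c)" and g: "g \<in> Aut K"
  shows "act_m y g \<in> closure (orbit_m c)"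
  unfolding closure_orbit_iff
proof (intro allI impI)
  fix \<Phi> :: "(nat \<Rightarrow> nat) set"
  assume "finite \<Phi>"
  then have "finite (compose (D m) g ` (\<Phi> \<inter> Hm))"
    by simp
  then obtain g' where g': "g' \<in> Aut K" "\<forall>f\<in>compose (D m) g ` (\<Phi> \<inter> Hm). act_m c g' f = y f"
    using y[unfolded closure_orbit_iff, rule_format] by blast
  have "act_m c (compose (carr K) g' g) f = act_m y g f" if "f \<in> \<Phi>" for f
    using that g'(2) compose_Aut_Hm[OF _ g] compose_compose_Hm[of f g' g] by (auto simp: act_def)
  then show "\<exists>h\<in>Aut K. \<forall>f\<in>\<Phi>. act_m c h f = act_m y g f"
    using Aut_compose[OF g'(1) g] by blast
qed

lemma closure_orbit_subset:
  assumes "y \<in> closure (orbit_m c)"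
  shows "closure (orbit_m y) \<subseteq> closure (orbit_m c)"
proof (rule closure_minimal)
  show "orbit_m y \<subseteq> closure (orbit_m c)"
    using act_in_closure_orbit[OF assms] by (auto simp: orbit_def)
qed simp

lemma in_closure_orbit_self:
  assumes "\<And>f. c f \<Longrightarrow> f \<in> Hm"
  shows "c \<in> closure (orbit_m c)"
proof -
  have id: "compose (D m) (restrict id (carr K)) f = f" if "f \<in> Hm" for f
    using HmD[OF that] by (auto simp: compose_def fun_eq_iff extensional_def)
  have "act_m c (restrict id (carr K)) = c"
  proof
    fix f
    show "act_m c (restrict id (carr K)) f = c f"
      using id[of f] assms[of f] by (cases "f \<in> Hm") (auto simp: act_def)
  qed
  then have "c \<in> orbit_m c"
    using restrict_id_Aut unfolding orbit_def by (metis image_eqI)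
  then show ?thesis
    using closure_subset by blast
qed

lemma minimal_set_iff_recurrent:
  assumes "S \<subseteq> Hm"
  shows "minimal_set K D m S \<longleftrightarrow>
    (\<forall>y\<in>closure (orbit_m (\<lambda>f. f \<in> S)). (\<lambda>f. f \<in> S) \<in> closure (orbit_m y))"
proof -
  have self: "(\<lambda>f. f \<in> S) \<in> closure (orbit_m (\<lambda>f. f \<in> S))"
    using assms by (intro in_closure_orbit_self) auto
  show ?thesis
    unfolding minimal_set_def
  proof (intro iffI ballI)
    fix y
    assume "\<forall>y\<in>closure (orbit_m (\<lambda>f. f \<in> S)). closure (orbit_m y) = closure (orbit_m (\<lambda>f. f \<in> S))"
      and "y \<in> closure (orbit_m (\<lambda>f. f \<in> S))"
    then show "(\<lambda>f. f \<in> S) \<in> closure (orbit_m y)"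
      using self by blast
  next
    fix y
    assume rec: "\<forall>y\<in>closure (orbit_m (\<lambda>f. f \<in> S)). (\<lambda>f. f \<in> S) \<in> closure (orbit_m y)"
      and y: "y \<in> closure (orbit_m (\<lambda>f. f \<in> S))"
    show "closure (orbit_m y) = closure (orbit_m (\<lambda>f. f \<in> S))"
      using closure_orbit_subset[OF y] closure_orbit_subset[OF rec[rule_format, OF y]]
      by (rule subset_antisym)
  qed
qed

text \<open>
  By the expansion property some B in KK contains a copy of Kp restricted to A_n inside each of
  its expansions. Whatever g does to the expansion of a fixed copy of B in K, an automorphism
  sending A_n to the right copy of A_n inside it restores the expansion of A_n.
\<close>

lemma Aut_restores_expansion:
  assumes Kp: "Kp \<in> X" and B: "B \<in> KK" "\<forall>Bs\<in>expansions_of Ks B. embeds (substr Kp (D n)) Bs"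
    and \<iota>: "\<iota> \<in> Emb B K" and g: "g \<in> Aut K"
  shows "\<exists>h\<in>Aut K. h ` D n \<subseteq> \<iota> ` carr B \<and> pullback Kp (D n) (compose (D n) g h) = substr Kp (D n)"
proof -
  define As where "As = substr Kp (D n)"
  have As: "As \<in> Ks"
    using X_space_substr[OF Kp D_finite D_subset] by (simp add: As_def)
  define \<phi> where "\<phi> = compose (carr B) g \<iota>"
  have \<phi>: "\<phi> \<in> Emb B (reduct Kp)"
    using Emb_compose[OF \<iota> Aut_Emb[OF g]] X_space_reduct[OF Kp] by (simp add: \<phi>_def)
  define Bs where "Bs = pullback Kp (carr B) \<phi>"
  have "substr Kp (\<phi> ` carr B) \<in> Ks"
    using X_space_substr[OF Kp] KK_fin_struc[OF B(1)] EmbD(3)[OF \<phi>] X_space_carr[OF Kp]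
    by (simp add: fin_struc_def)
  then have Bs: "Bs \<in> expansions_of Ks B"
    unfolding Bs_def by (rule pullback_in_expansions[OF B(1) X_space_wf[OF Kp] \<phi>])
  then obtain e where e: "e \<in> Emb As Bs"
    using B(2) by (auto simp: embeds_def As_def)
  have "reduct As = A_ex K D n"
    using X_space_reduct[OF Kp] by (simp add: As_def reduct_substr A_ex_def)
  then have e_red: "e \<in> Emb (A_ex K D n) B"
    using Emb_reduct[OF e] reduct_expansion[OF Bs] by simp
  then have eD: "e ` D n \<subseteq> carr B"
    using EmbD(3) by fastforce
  obtain h where h: "h \<in> Aut K" "\<forall>x\<in>D n. h x = \<iota> (e x)"
    using Emb_A_ex_extends_to_Aut[OF Emb_compose[OF e_red \<iota>]] by (auto simp: compose_def)
  have "pullback Kp (D n) (compose (D n) g h) = pullback Kp (D n) (compose (D n) \<phi> e)"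
    by (rule pullback_cong) (use h(2) eD in \<open>auto simp: compose_def \<phi>_def\<close>)
  also have "\<dots> = pullback Bs (D n) e"
    unfolding Bs_def by (rule pullback_pullback[OF eD, symmetric])
  also have "\<dots> = As"
    using pullback_Emb_eq[OF e Ks_wf[OF As]] by (simp add: As_def)
  finally have "pullback Kp (D n) (compose (D n) g h) = As" .
  moreover have "h ` D n \<subseteq> \<iota> ` carr B"
    using h(2) eD by auto
  ultimately show ?thesis
    using h(1) unfolding As_def by blast
qed

lemma Aut_realigns_expansion:
  assumes Kp: "Kp \<in> X"
  shows "\<exists>V. finite V \<and> (\<forall>g\<in>Aut K. \<exists>h\<in>Aut K.
    h ` D n \<subseteq> V \<and> pullback Kp (D n) (compose (D n) g h) = substr Kp (D n))"
proof -
  obtain B where B: "B \<in> KK" "\<forall>Bs\<in>expansions_of Ks B. embeds (substr Kp (D n)) Bs"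
    using Ks_expansion_property[OF X_space_substr[OF Kp D_finite D_subset]] by blast
  obtain \<iota> where \<iota>: "\<iota> \<in> Emb B K"
    using KK_Emb_K[OF B(1)] by blast
  have "finite (\<iota> ` carr B)"
    using KK_fin_struc[OF B(1)] by (simp add: fin_struc_def)
  then show ?thesis
    using Aut_restores_expansion[OF Kp B \<iota>] by blast
qed

lemma H_E_recurrent:
  assumes Kp: "Kp \<in> X" and y: "y \<in> closure (orbit_m (\<lambda>f. f \<in> H_E K D m E Kp))"
  shows "(\<lambda>f. f \<in> H_E K D m E Kp) \<in> closure (orbit_m y)"
  unfolding closure_orbit_iff
proof (intro allI impI)
  let ?c = "\<lambda>f. f \<in> H_E K D m E Kp"
  fix \<Phi> :: "(nat \<Rightarrow> nat) set"
  assume "finite \<Phi>"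
  then obtain n where n: "\<Phi> \<inter> Hm \<subseteq> H_into (D n)"
    using H_into_cover[of "\<Phi> \<inter> Hm"] by auto
  obtain V where V: "finite V" "\<forall>g\<in>Aut K. \<exists>h\<in>Aut K.
      h ` D n \<subseteq> V \<and> pullback Kp (D n) (compose (D n) g h) = substr Kp (D n)"
    using Aut_realigns_expansion[OF Kp, of n] by blast
  obtain g where g: "g \<in> Aut K" "\<forall>f\<in>H_into V. act_m ?c g f = y f"
    using y[unfolded closure_orbit_iff, rule_format, OF finite_H_into[OF V(1)]] by blast
  obtain h where h: "h \<in> Aut K" "h ` D n \<subseteq> V"
    "pullback Kp (D n) (compose (D n) g h) = substr Kp (D n)"
    using V(2) g(1) by blast
  have "act_m y h f = ?c f" if "f \<in> \<Phi>" for f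
  proof (cases "f \<in> Hm")
    case False
    then show ?thesis
      by (auto simp: act_def H_E_def)
  next
    case True
    then have fD: "f ` D m \<subseteq> D n"
      using n that by (auto simp: H_into_def)
    have "compose (D m) h f ` D m \<subseteq> h ` D n"
      using fD by (auto simp: compose_def)
    then have hf: "compose (D m) h f \<in> H_into V"
      using compose_Aut_Hm[OF True h(1)] h(2) by (simp add: H_into_def)
    have type: "pullback Kp (D m) (compose (D m) g (compose (D m) h f)) = pullback Kp (D m) f"
      by (rule pullback_compose_stable[OF h(3) fD])
    have "act_m y h f = act_m ?c g (compose (D m) h f)"
      using True g(2) hf by (simp add: act_def)
    also have "\<dots> = ?c f"
      using True type compose_Aut_Hm[OF True h(1)] compose_Aut_Hm[OF compose_Aut_Hm[OF True h(1)] g(1)]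
      by (simp add: act_def H_E_def)
    finally show ?thesis .
  qed
  then show "\<exists>h\<in>Aut K. \<forall>f\<in>\<Phi>. act_m y h f = ?c f"
    using h(1) by blast
qed

lemma minimal_set_H_E:
  assumes Kp: "Kp \<in> X"
  shows "minimal_set K D m (H_E K D m E Kp)"
proof -
  have "H_E K D m E Kp \<subseteq> Hm"
    by (auto simp: H_E_def)
  then show ?thesis
    using minimal_set_iff_recurrent H_E_recurrent[OF Kp] by blast
qed

lemma pullback_H_in_expansions:
  assumes Kp: "Kp \<in> X" and f: "f \<in> Hm"
  shows "pullback Kp (D m) f \<in> expansions_of Ks (A_ex K D m)"
proof -
  have "f \<in> Emb (A_ex K D m) (reduct Kp)"
    using f X_space_reduct[OF Kp] by (simp add: H_def)
  moreover have "substr Kp (f ` D m) \<in> Ks"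
    using X_space_substr[OF Kp] D_finite HmD(3)[OF f] by simp
  ultimately show ?thesis
    using pullback_in_expansions[OF A_ex_in_KK X_space_wf[OF Kp]] by simp
qed

subsection \<open>Type-determined predicates\<close>

text \<open>
  The predicates determined at every level are the sets H_m(E,K') in disguise
  (type_determined_imp_H_E), but unlike those they are visibly closed.
\<close>

definition determined_at :: "nat \<Rightarrow> ('r + 's) struc \<Rightarrow> ((nat \<Rightarrow> nat) \<Rightarrow> bool) \<Rightarrow> bool" where
  "determined_at n P c \<longleftrightarrow> P \<in> expansions_of Ks (A_ex K D n) \<and>
     (\<forall>f\<in>H_into (D n). \<forall>f'\<in>H_into (D n). pullback P (D m) f = pullback P (D m) f' \<longrightarrow> c f = c f')"

definition type_determined :: "((nat \<Rightarrow> nat) \<Rightarrow> bool) set" where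
  "type_determined = {c. (\<forall>f. c f \<longrightarrow> f \<in> Hm) \<and> (\<forall>n. \<exists>P. determined_at n P c)}"

lemma determined_at_restrict:
  assumes c: "determined_at k P c" and "n \<le> k"
  shows "determined_at n (substr P (D n)) c"
proof -
  have "pullback (substr P (D n)) (D m) f = pullback P (D m) f" if "f \<in> H_into (D n)" for f
    using that by (intro pullback_substr) (simp add: H_into_def)
  then show ?thesis
    using c expansion_substr[OF _ \<open>n \<le> k\<close>] H_into_mono[OF \<open>n \<le> k\<close>]
    unfolding determined_at_def by (metis subsetD)
qed

lemma closed_determined_at: "closed {c. \<exists>P. determined_at n P c}"
proof -
  have "\<exists>P. determined_at n P c" if c: "c \<in> closure {c. \<exists>P. determined_at n P c}" for c
  proof -
    obtain u where u: "\<exists>P. determined_at n P u" "\<forall>f\<in>H_into (D n). u f = c f"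
      using closure_bool_funD[OF c finite_H_into[OF D_finite]] by blast
    then show ?thesis
      unfolding determined_at_def by metis
  qed
  then show ?thesis
    using closure_subset_eq by blast
qed

lemma closed_type_determined: "closed type_determined"
proof -
  have "type_determined = {c. \<forall>f. c f \<longrightarrow> f \<in> Hm} \<inter> (\<Inter>n. {c. \<exists>P. determined_at n P c})"
    by (auto simp: type_determined_def)
  moreover have "closed (\<Inter>n. {c. \<exists>P. determined_at n P c})"
    by (intro closed_INT ballI closed_determined_at)
  ultimately show ?thesis
    using closed_Int[OF closed_bool_fun_supported] by simp
qed

lemma act_determined_at:
  assumes c: "determined_at k P c" and g: "g \<in> Aut K" and gD: "g ` D n \<subseteq> D k"
  shows "determined_at n (pullback P (D n) (restrict g (D n))) (act_m c g)"
proof -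
  have P: "P \<in> expansions_of Ks (A_ex K D k)"
    using c by (simp add: determined_at_def)
  have "restrict g (D n) \<in> Emb (A_ex K D n) K"
    using Emb_restrict[OF Aut_Emb[OF g] D_subset] by (simp add: A_ex_def)
  then have "restrict g (D n) \<in> Emb (A_ex K D n) (A_ex K D k)"
    unfolding A_ex_def[of K D k] by (rule Emb_substr_target) (use gD in auto)
  then have g_red: "restrict g (D n) \<in> Emb (A_ex K D n) (reduct P)"
    using reduct_expansion[OF P] by simp
  have "substr P (restrict g (D n) ` D n) \<in> Ks"
    using Ks_substr[OF expansion_in_Ks[OF P]] gD carr_expansion[OF P] by simp
  then have exp: "pullback P (D n) (restrict g (D n)) \<in> expansions_of Ks (A_ex K D n)"
    using pullback_in_expansions[OF A_ex_in_KK Ks_wf[OF expansion_in_Ks[OF P]] g_red] by simp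
  have type: "pullback (pullback P (D n) (restrict g (D n))) (D m) f = pullback P (D m) (compose (D m) g f)"
    and gf: "compose (D m) g f \<in> H_into (D k)"
    if f: "f \<in> H_into (D n)" for f
  proof -
    have fD: "f ` D m \<subseteq> D n" and fH: "f \<in> Hm"
      using f by (auto simp: H_into_def)
    show "pullback (pullback P (D n) (restrict g (D n))) (D m) f = pullback P (D m) (compose (D m) g f)"
      unfolding pullback_pullback[OF fD] by (rule pullback_cong) (use fD in \<open>auto simp: compose_def\<close>)
    have "compose (D m) g f ` D m \<subseteq> g ` D n"
      using fD by (auto simp: compose_def)
    then show "compose (D m) g f \<in> H_into (D k)"
      using compose_Aut_Hm[OF fH g] gD by (simp add: H_into_def)
  qed
  show ?thesis
    unfolding determined_at_def
  proof (intro conjI exp ballI impI)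
    fix f f'
    assume f: "f \<in> H_into (D n)" and f': "f' \<in> H_into (D n)"
      and "pullback (pullback P (D n) (restrict g (D n))) (D m) f =
        pullback (pullback P (D n) (restrict g (D n))) (D m) f'"
    then have "c (compose (D m) g f) = c (compose (D m) g f')"
      using c gf[OF f] gf[OF f'] type[OF f] type[OF f'] unfolding determined_at_def by metis
    then show "act_m c g f = act_m c g f'"
      using f f' by (simp add: act_def H_into_def)
  qed
qed

lemma act_type_determined:
  assumes c: "c \<in> type_determined" and g: "g \<in> Aut K"
  shows "act_m c g \<in> type_determined"
proof -
  have "\<exists>P. determined_at n P (act_m c g)" for n
  proof -
    have "g ` D n \<subseteq> carr K"
      using EmbD(3)[OF Aut_Emb[OF g]] D_subset by blast
    then obtain k where k: "g ` D n \<subseteq> D k"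
      using finite_subset_D[OF finite_imageI[OF D_finite]] by blast
    obtain P where "determined_at k P c"
      using c unfolding type_determined_def by blast
    then show ?thesis
      using act_determined_at[OF _ g k] by blast
  qed
  then show ?thesis
    by (simp add: type_determined_def act_def)
qed

lemma closure_orbit_type_determined:
  assumes "c \<in> type_determined"
  shows "closure (orbit_m c) \<subseteq> type_determined"
proof (rule closure_minimal)
  show "orbit_m c \<subseteq> type_determined"
    using act_type_determined[OF assms] by (auto simp: orbit_def)
qed (rule closed_type_determined)

text \<open>
  Colour each embedding of an expansion of A_m into the Ramsey witness C by the value of c after
  embedding C into K; the composite of that embedding with a homogeneous copy of P is e.
\<close>

lemma ramsey_homogeneous_Emb:
  fixes c :: "(nat \<Rightarrow> nat) \<Rightarrow> bool"
  assumes P: "P \<in> Ks"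
  shows "\<exists>e\<in>Emb (reduct P) K. \<forall>A\<in>expansions_of Ks (A_ex K D m).
    \<exists>k. \<forall>u\<in>Emb A P. c (compose (D m) e u) = k"
proof -
  obtain L where L: "set L = expansions_of Ks (A_ex K D m)"
    using finite_list[OF finite_expansions[OF A_ex_in_KK]] by blast
  then have L_Ks: "set L \<subseteq> Ks"
    unfolding expansions_of_def by blast
  obtain C where C: "C \<in> Ks" and colour: "\<And>col :: ('r + 's) struc \<Rightarrow> (nat \<Rightarrow> nat) \<Rightarrow> bool.
      \<exists>h\<in>Emb P C. \<forall>A\<in>set L. \<exists>k. \<forall>e\<in>Emb A P. col A (compose (carr A) h e) = k"
    using ramsey_property_simultaneous[OF Ks_ramsey Ks_class_of_fin P L_Ks] by blast
  have "reduct C \<in> KK"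
    using C reduct_Ks by blast
  then obtain \<iota> where \<iota>: "\<iota> \<in> Emb (reduct C) K"
    using KK_Emb_K by blast
  obtain h where h: "h \<in> Emb P C"
    and mono: "\<forall>A\<in>set L. \<exists>k. \<forall>u\<in>Emb A P. c (compose (carr A) \<iota> (compose (carr A) h u)) = k"
    using colour[of "\<lambda>A u. c (compose (carr A) \<iota> u)"] by blast
  have "compose (D m) (compose (carr P) \<iota> h) u = compose (D m) \<iota> (compose (D m) h u)"
    if "A \<in> expansions_of Ks (A_ex K D m)" "u \<in> Emb A P" for A u
  proof -
    have "u \<in> D m \<rightarrow> carr P"
      using EmbD(3)[OF that(2)] carr_expansion[OF that(1)] by (simp add: image_subset_iff_funcset)
    then show ?thesis
      by (simp add: compose_assoc)
  qed
  then have "\<forall>A\<in>expansions_of Ks (A_ex K D m). \<exists>k. \<forall>u\<in>Emb A P. c (compose (D m) (compose (carr P) \<iota> h) u) = k"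
    using mono carr_expansion unfolding L by (metis (no_types, lifting))
  moreover have "compose (carr P) \<iota> h \<in> Emb (reduct P) K"
    using Emb_compose[OF Emb_reduct[OF h] \<iota>] by simp
  ultimately show ?thesis
    by blast
qed

lemma ramsey_determined_at: "\<exists>g\<in>Aut K. \<exists>P. determined_at n P (act_m c g)"
proof -
  have "A_ex K D n \<in> reduct ` Ks"
    using A_ex_in_KK reduct_Ks by simp
  then obtain P where P: "P \<in> Ks" "reduct P = A_ex K D n"
    by (metis imageE)
  then have P_exp: "P \<in> expansions_of Ks (A_ex K D n)"
    by (simp add: expansions_of_def)
  then have carr_P: "carr P = D n"
    by (rule carr_expansion)
  obtain e where e: "e \<in> Emb (A_ex K D n) K"
    and mono: "\<forall>A\<in>expansions_of Ks (A_ex K D m). \<exists>k. \<forall>u\<in>Emb A P. c (compose (D m) e u) = k"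
    using ramsey_homogeneous_Emb[OF P(1), where c = c] P(2) by auto
  obtain g where g: "g \<in> Aut K" "\<forall>x\<in>D n. g x = e x"
    using Emb_A_ex_extends_to_Aut[OF e] by blast
  have "act_m c g f = act_m c g f'"
    if f: "f \<in> H_into (D n)" and f': "f' \<in> H_into (D n)" and eq: "pullback P (D m) f = pullback P (D m) f'"
    for f f'
  proof -
    define A where "A = pullback P (D m) f"
    have "f \<in> Emb (A_ex K D m) (reduct P)"
      using H_into_Emb[OF f] P(2) by simp
    moreover have "substr P (f ` D m) \<in> Ks"
      using Ks_substr[OF P(1)] f carr_P by (simp add: H_into_def)
    ultimately have "A \<in> expansions_of Ks (A_ex K D m)"
      unfolding A_def using pullback_in_expansions[OF A_ex_in_KK Ks_wf[OF P(1)]] by simp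
    then obtain k where k: "\<forall>u\<in>Emb A P. c (compose (D m) e u) = k"
      using mono by blast
    have "c (compose (D m) g u) = k" if u: "u \<in> H_into (D n)" "pullback P (D m) u = A" for u
    proof -
      have uD: "u ` D m \<subseteq> D n" and "u \<in> Hm"
        using u(1) by (auto simp: H_into_def)
      have "u \<in> Emb A P"
        unfolding u(2)[symmetric] by (rule Emb_pullback) (use HmD[OF \<open>u \<in> Hm\<close>] uD carr_P in auto)
      moreover have "compose (D m) g u = compose (D m) e u"
        using uD g(2) by (auto simp: compose_def intro!: restrict_ext)
      ultimately show ?thesis
        using k by simp
    qed
    then have "c (compose (D m) g f) = c (compose (D m) g f')"
      using f f' eq by (simp add: A_def)
    then show ?thesis
      using f f' by (simp add: act_def H_into_def)
  qed
  then have "determined_at n P (act_m c g)"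
    using P_exp unfolding determined_at_def by blast
  then show ?thesis
    using g(1) by blast
qed

lemma closure_orbit_meets_determined_upto:
  assumes "finite I"
  shows "closure (orbit_m c) \<inter> (\<Inter>n\<in>I. {y. \<exists>P. determined_at n P y}) \<noteq> {}"
proof -
  define N where "N = Max (insert 0 I)"
  obtain g P where g: "g \<in> Aut K" and P: "determined_at N P (act_m c g)"
    using ramsey_determined_at by blast
  have "act_m c g \<in> orbit_m c"
    using g by (simp add: orbit_def)
  then have "act_m c g \<in> closure (orbit_m c)"
    using closure_subset by blast
  moreover have "act_m c g \<in> (\<Inter>n\<in>I. {y. \<exists>P. determined_at n P y})"
  proof
    fix n
    assume "n \<in> I"
    then have "n \<le> N"
      using assms by (simp add: N_def)
    then show "act_m c g \<in> {y. \<exists>P. determined_at n P y}"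
      using determined_at_restrict[OF P] by blast
  qed
  ultimately have "act_m c g \<in> closure (orbit_m c) \<inter> (\<Inter>n\<in>I. {y. \<exists>P. determined_at n P y})"
    by (rule IntI)
  then show ?thesis
    by (rule ex_in_conv[THEN iffD1, OF exI])
qed

lemma closure_orbit_supported: "closure (orbit_m c) \<subseteq> {y. \<forall>f. y f \<longrightarrow> f \<in> Hm}"
proof (rule closure_minimal)
  show "orbit_m c \<subseteq> {y. \<forall>f. y f \<longrightarrow> f \<in> Hm}"
    by (auto simp: orbit_def act_def)
qed (rule closed_bool_fun_supported)

text \<open>
  Compactness: the closed sets of predicates determined at level n decrease in n, and each of
  them meets the orbit closure.
\<close>

lemma closure_orbit_meets_type_determined: "\<exists>y\<in>closure (orbit_m c). y \<in> type_determined"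
proof -
  let ?L = "\<lambda>n. {y. \<exists>P. determined_at n P y}"
  have "\<exists>y. y \<in> closure (orbit_m c) \<inter> (\<Inter>n\<in>UNIV. ?L n)"
    unfolding ex_in_conv
  proof (rule compact_imp_fip_image)
    show "compact (closure (orbit_m c))"
      using compact_Int_closed[OF compact_UNIV_bool_fun closed_closure] by simp
    show "closed (?L n)" for n
      by (rule closed_determined_at)
    show "closure (orbit_m c) \<inter> (\<Inter>n\<in>I. ?L n) \<noteq> {}" if "finite I" for I
      using closure_orbit_meets_determined_upto[OF that] .
  qed
  then obtain y where "y \<in> closure (orbit_m c) \<inter> (\<Inter>n. ?L n)" ..
  then have y: "y \<in> closure (orbit_m c)" "y \<in> (\<Inter>n. ?L n)"
    by (rule IntD1, rule IntD2)
  with closure_orbit_supported have "y \<in> type_determined"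
    unfolding type_determined_def by blast
  with y(1) show ?thesis
    by blast
qed

subsection \<open>Gluing expansions along the exhaustion\<close>

definition direct_limit :: "(nat \<Rightarrow> ('r + 's) struc) \<Rightarrow> ('r + 's) struc" where
  "direct_limit P = (carr K, \<lambda>R xs. \<exists>n. rel (P n) R xs)"

lemma carr_direct_limit [simp]: "carr (direct_limit P) = carr K"
  by (simp add: direct_limit_def carr_def)

lemma rel_direct_limit [simp]: "rel (direct_limit P) R xs \<longleftrightarrow> (\<exists>n. rel (P n) R xs)"
  by (simp add: direct_limit_def rel_def)

context
  fixes P :: "nat \<Rightarrow> ('r + 's) struc"
  assumes P_expansion: "\<And>n. P n \<in> expansions_of Ks (A_ex K D n)"
    and P_coherent: "\<And>n k. n \<le> k \<Longrightarrow> substr (P k) (D n) = P n"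
begin

lemma wf_P: "wf_struc (arx ar ars) (P n)"
  by (rule Ks_wf[OF expansion_in_Ks[OF P_expansion]])

lemma rel_P_subset: "rel (P n) R xs \<Longrightarrow> set xs \<subseteq> D n"
  using wf_P[of n, unfolded wf_struc_def] carr_expansion[OF P_expansion] by blast

lemma rel_P_mono:
  assumes "n \<le> k" "rel (P n) R xs"
  shows "rel (P k) R xs"
proof -
  have "rel (substr (P k) (D n)) R xs"
    using assms P_coherent[OF assms(1)] by simp
  then show ?thesis
    by simp
qed

lemma substr_direct_limit: "substr (direct_limit P) (D n) = P n"
proof (rule struc_eqI)
  show "carr (substr (direct_limit P) (D n)) = carr (P n)"
    using carr_expansion[OF P_expansion] by simp
  fix R xs
  show "rel (substr (direct_limit P) (D n)) R xs = rel (P n) R xs"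
  proof
    assume "rel (substr (direct_limit P) (D n)) R xs"
    then obtain k where k: "set xs \<subseteq> D n" "rel (P k) R xs"
      by auto
    then have "rel (substr (P (max n k)) (D n)) R xs"
      using rel_P_mono[of k "max n k"] by simp
    then show "rel (P n) R xs"
      using P_coherent[of n "max n k"] by simp
  next
    assume "rel (P n) R xs"
    then show "rel (substr (direct_limit P) (D n)) R xs"
      using rel_P_subset by auto
  qed
qed

lemma reduct_direct_limit: "reduct (direct_limit P) = K"
proof (rule struc_eqI)
  fix R xs
  have "rel (P n) (Inl R) xs \<longleftrightarrow> set xs \<subseteq> D n \<and> rel K R xs" for n
  proof -
    have "rel (P n) (Inl R) xs = rel (reduct (P n)) R xs"
      by simp
    also have "\<dots> = rel (substr K (D n)) R xs"
      using reduct_expansion[OF P_expansion] by (simp add: A_ex_def)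
    finally show ?thesis
      by simp
  qed
  moreover have "\<exists>n. set xs \<subseteq> D n" if "rel K R xs"
    using wf_K that finite_subset_D[of "set xs"] unfolding wf_struc_def by blast
  ultimately show "rel (reduct (direct_limit P)) R xs = rel K R xs"
    by auto
qed simp

lemma direct_limit_in_X: "direct_limit P \<in> X"
proof -
  have "wf_struc (arx ar ars) (direct_limit P)"
    unfolding wf_struc_def
  proof (intro allI impI)
    fix R xs
    assume "rel (direct_limit P) R xs"
    then obtain n where n: "rel (P n) R xs"
      by auto
    then show "length xs = arx ar ars R \<and> set xs \<subseteq> carr (direct_limit P)"
      using wf_P[of n] rel_P_subset[OF n] D_subset[of n] unfolding wf_struc_def by auto
  qed
  moreover have "substr (direct_limit P) Y \<in> Ks" if Y: "finite Y" "Y \<subseteq> carr K" for Y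
  proof -
    obtain n where n: "Y \<subseteq> D n"
      using finite_subset_D[OF Y] by blast
    then have "substr (direct_limit P) Y = substr (P n) Y"
      using substr_substr[OF n, of "direct_limit P"] substr_direct_limit by simp
    then show ?thesis
      using Ks_substr[OF expansion_in_Ks[OF P_expansion]] n carr_expansion[OF P_expansion] by simp
  qed
  ultimately show ?thesis
    using reduct_direct_limit by (simp add: X_space_def)
qed

lemma pullback_direct_limit:
  assumes "f \<in> H_into (D n)"
  shows "pullback (direct_limit P) (D m) f = pullback (P n) (D m) f"
proof -
  have "f ` D m \<subseteq> D n"
    using assms by (simp add: H_into_def)
  then show ?thesis
    using pullback_substr[of f "D m" "D n" "direct_limit P"] substr_direct_limit by simp
qed

end

lemma type_determined_coherent:
  assumes c: "c \<in> type_determined"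
  shows "\<exists>s. \<forall>n. determined_at n (s n) c \<and> (\<forall>k\<ge>n. substr (s k) (D n) = s n)"
proof (rule inverse_system_coherent_sequence)
  show "determined_at n (substr P (D n)) c" if "n \<le> k" "determined_at k P c" for n k P
    using determined_at_restrict[OF that(2,1)] .
  show "substr (substr P (D k)) (D n) = substr P (D n)" if "n \<le> k" for n k and P :: "('r + 's) struc"
    using substr_substr[OF D_mono[OF that]] .
  show "finite {P. determined_at n P c}" for n
    by (rule finite_subset[OF _ finite_expansions[OF A_ex_in_KK]]) (auto simp: determined_at_def)
  show "\<exists>P. determined_at n P c" for n
    using c unfolding type_determined_def by blast
  show "substr P (D n) = P" if "determined_at n P c" for n P
    using that expansion_substr_self by (simp add: determined_at_def)
qed

lemma type_determined_imp_H_E: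
  assumes S: "(\<lambda>f. f \<in> S) \<in> type_determined"
  shows "\<exists>Kp\<in>X. \<exists>E\<subseteq>expansions_of Ks (A_ex K D m). S = H_E K D m E Kp"
proof -
  let ?c = "\<lambda>f. f \<in> S"
  have S_Hm: "S \<subseteq> Hm"
    using S by (auto simp: type_determined_def)
  from type_determined_coherent[OF S]
  obtain s where s: "\<And>n. determined_at n (s n) ?c" and coh: "\<And>n k. n \<le> k \<Longrightarrow> substr (s k) (D n) = s n"
    by blast
  have s_exp: "s n \<in> expansions_of Ks (A_ex K D n)" for n
    using s by (simp add: determined_at_def)
  define Kp where "Kp = direct_limit s"
  have Kp: "Kp \<in> X"
    unfolding Kp_def by (rule direct_limit_in_X[OF s_exp coh])
  define E where "E = (\<lambda>f. pullback Kp (D m) f) ` S"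
  have "E \<subseteq> expansions_of Ks (A_ex K D m)"
    using pullback_H_in_expansions[OF Kp] S_Hm by (auto simp: E_def)
  moreover have "S = H_E K D m E Kp"
  proof
    show "S \<subseteq> H_E K D m E Kp"
      using S_Hm by (auto simp: H_E_def E_def)
    show "H_E K D m E Kp \<subseteq> S"
    proof
      fix f
      assume "f \<in> H_E K D m E Kp"
      then obtain f0 where f: "f \<in> Hm" and f0: "f0 \<in> S" "pullback Kp (D m) f = pullback Kp (D m) f0"
        by (auto simp: H_E_def E_def)
      obtain n where n: "{f, f0} \<subseteq> H_into (D n)"
        using H_into_cover[of "{f, f0}"] f f0(1) S_Hm by auto
      then have "pullback (s n) (D m) f = pullback (s n) (D m) f0"
        using f0(2) pullback_direct_limit[OF s_exp coh] unfolding Kp_def by auto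
      then show "f \<in> S"
        using s[of n] n f0(1) unfolding determined_at_def by blast
    qed
  qed
  ultimately show ?thesis
    using Kp by blast
qed

lemma minimal_set_imp_H_E:
  assumes min: "minimal_set K D m S" and S_Hm: "S \<subseteq> Hm"
  shows "\<exists>Kp\<in>X. \<exists>E\<subseteq>expansions_of Ks (A_ex K D m). S = H_E K D m E Kp"
proof -
  obtain y where y: "y \<in> closure (orbit_m (\<lambda>f. f \<in> S))" "y \<in> type_determined"
    using closure_orbit_meets_type_determined by blast
  then have "(\<lambda>f. f \<in> S) \<in> closure (orbit_m y)"
    using min minimal_set_iff_recurrent[OF S_Hm] by blast
  then have "(\<lambda>f. f \<in> S) \<in> type_determined"
    using closure_orbit_type_determined[OF y(2)] by blast
  then show ?thesis
    by (rule type_determined_imp_H_E)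
qed

end

theorem mainTheorem5:
  fixes ar :: "'r \<Rightarrow> nat" and ars :: "'s \<Rightarrow> nat"
    and KK :: "'r struc set" and K :: "'r struc" and D :: "nat \<Rightarrow> nat set"
    and Ks :: "('r + 's) struc set" and m :: nat and S :: "(nat \<Rightarrow> nat) set"
  assumes "fraisse_class ar KK"
    and "fraisse_limit ar KK K"
    and "exhaustion K D"
    and "is_expansion ar ars Ks KK"
    and "excellent ar ars Ks KK"
    and "S \<subseteq> H K D m"
  shows "minimal_set K D m S \<longleftrightarrow>
    (\<exists>Kp \<in> X_space ar ars Ks K. \<exists>E \<subseteq> expansions_of Ks (A_ex K D m). S = H_E K D m E Kp)"
proof -
  interpret excellent_expansion ar ars KK K D Ks m
    using assms by unfold_locales
  show ?thesis
    using minimal_set_imp_H_E[OF _ assms(6)] minimal_set_H_E by blast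
qed

end
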